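(* Let $V$ be a reflexive Banach space, $(X_n)_{n\in\mathbb N}$ Banach spaces and $Y$ a Banach space as in the definition below, and let $(V_n)_{n\in\mathbb N}$ be a non-conforming approximation of $V$ with respect to $(X_n)_{n\in\mathbb N}$ and $Y$. Suppose: - $A_n:X_n\to X_n^*$, $n\in\mathbb N$, is non-conforming pseudo-monotone with respect to $(V_n)$ and $A:V\to V^*$; - $B_n:X_n\to X_n^*$, $n\in\mathbb N$, is non-conforming pseudo-monotone with respect to $(V_n)$ and $B:V\to V^*$. Then $A_n+B_n:X_n\to X_n^*$, $n\in\mathbb N$, is non-conforming pseudo-monotone with respect to $(V_n)$ and $A+B:V\to V^*$.
   Context: Non-conforming approximation. Let $V$ be a reflexive Banach space and $(X_n)_{n\in\mathbb N}$ Banach spaces with $V\subseteq X_n$ and $\|\cdot\|_V=\|\cdot\|_{X_n}$ on $V$ for all $n$. Let $Y$ be a Banach space with $X_n\subseteq Y$ for all $n$. A sequence of reflexive Banach spaces $V_n\subseteq X_n$ is called a non-conforming approximation of $V$ with respect to $(X_n)$ and $Y$ if: - (NC.1) there is a dense subset $D\subseteq V$ such that for every $v\in D$ there exist $v_n\in V_n$ with $\|v_n-v\|_{X_n}\to0$; - (NC.2) for each sequence $v_n\in V_{m_n}$, where $(m_n)\subseteq\mathbb N$ with $m_n\to\infty$, the bound $\sup_n\|v_n\|_{X_{m_n}}<\infty$ implies that there exist a subsequence $(v_{n_\ell})$ and $v\in V$ with $v_{n_\ell}\rightharpoonup v$ weakly in $Y$. Non-conforming pseudo-monotonicity. Operators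 $A_n:X_n\to X_n^*$ are called non-conforming pseudo-monotone with respect to $(V_n)$ and $A:V\to V^*$ if the following holds. For each sequence $v_n\in V_{m_n}$ with $m_n\to\infty$ such that - $\sup_n\|v_n\|_{X_{m_n}}<\infty$, - $v_n\rightharpoonup v$ weakly in $Y$ (by (NC.2), such $v$ lies in $V$), and - $\limsup_n\langle A_{m_n}v_n,v_n-v\rangle_{X_{m_n}}\le0$, it follows that $\langle Av,v-z\rangle_V\le\liminf_n\langle A_{m_n}v_n,v_n-z\rangle_{X_{m_n}}$ for all $z\in V$. *)

theory Defs
  imports "HOL-Analysis.Analysis"
begin

text \<open>All spaces are real and embedded (as sets) in the ambient Banach space Y,
  modelled as a type 'y of class banach. A subspace S of Y carrying its own
  norm nrm is represented by the pair (S, nrm). Functionals on S are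
  represented by functions 'y \<Rightarrow> real (only their values on S matter).\<close>

definition is_norm_on :: "'y::real_vector set \<Rightarrow> ('y \<Rightarrow> real) \<Rightarrow> bool" where
  "is_norm_on S nrm \<longleftrightarrow>
     (\<forall>x\<in>S. 0 \<le> nrm x) \<and> (\<forall>x\<in>S. nrm x = 0 \<longleftrightarrow> x = 0) \<and>
     (\<forall>c. \<forall>x\<in>S. nrm (c *\<^sub>R x) = \<bar>c\<bar> * nrm x) \<and>
     (\<forall>x\<in>S. \<forall>y\<in>S. nrm (x + y) \<le> nrm x + nrm y)"

definition banach_space_on :: "'y::real_vector set \<Rightarrow> ('y \<Rightarrow> real) \<Rightarrow> bool" where
  "banach_space_on S nrm \<longleftrightarrow> subspace S \<and> is_norm_on S nrm \<and>
     (\<forall>u::nat \<Rightarrow> 'y. (\<forall>n. u n \<in> S) \<and>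
        (\<forall>e>0. \<exists>N. \<forall>k\<ge>N. \<forall>l\<ge>N. nrm (u k - u l) < e)
        \<longrightarrow> (\<exists>x\<in>S. (\<lambda>n. nrm (u n - x)) \<longlonglongrightarrow> 0))"

definition dual_space :: "'y::real_vector set \<Rightarrow> ('y \<Rightarrow> real) \<Rightarrow> ('y \<Rightarrow> real) set" where
  "dual_space S nrm = {f.
     (\<forall>x\<in>S. \<forall>y\<in>S. f (x + y) = f x + f y) \<and>
     (\<forall>c. \<forall>x\<in>S. f (c *\<^sub>R x) = c * f x) \<and>
     (\<exists>C. \<forall>x\<in>S. \<bar>f x\<bar> \<le> C * nrm x)}"

definition dual_norm :: "'y::real_vector set \<Rightarrow> ('y \<Rightarrow> real) \<Rightarrow> ('y \<Rightarrow> real) \<Rightarrow> real" where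
  "dual_norm S nrm f = (SUP x\<in>{x\<in>S. nrm x \<le> 1}. \<bar>f x\<bar>)"

definition reflexive_on :: "'y::real_vector set \<Rightarrow> ('y \<Rightarrow> real) \<Rightarrow> bool" where
  "reflexive_on S nrm \<longleftrightarrow>
     (\<forall>\<Phi> :: ('y \<Rightarrow> real) \<Rightarrow> real.
        (\<forall>f\<in>dual_space S nrm. \<forall>g\<in>dual_space S nrm. \<Phi> (\<lambda>x. f x + g x) = \<Phi> f + \<Phi> g) \<and>
        (\<forall>c. \<forall>f\<in>dual_space S nrm. \<Phi> (\<lambda>x. c * f x) = c * \<Phi> f) \<and>
        (\<exists>C. \<forall>f\<in>dual_space S nrm. \<bar>\<Phi> f\<bar> \<le> C * dual_norm S nrm f)
      \<longrightarrow> (\<exists>x\<in>S. \<forall>f\<in>dual_space S nrm. \<Phi> f = f x))"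

definition reflexive_banach_on :: "'y::real_vector set \<Rightarrow> ('y \<Rightarrow> real) \<Rightarrow> bool" where
  "reflexive_banach_on S nrm \<longleftrightarrow> banach_space_on S nrm \<and> reflexive_on S nrm"

definition weakly_conv :: "(nat \<Rightarrow> 'y::real_normed_vector) \<Rightarrow> 'y \<Rightarrow> bool" where
  "weakly_conv u x \<longleftrightarrow>
     (\<forall>f :: 'y \<Rightarrow> real. bounded_linear f \<longrightarrow> (\<lambda>n. f (u n)) \<longlonglongrightarrow> f x)"

text \<open>Standing assumptions: V reflexive Banach, X_n Banach, V \<subseteq> X_n with equal norms on V
  (X_n \<subseteq> Y is automatic since all spaces live in the type 'y).\<close>
definition nc_setting :: "'y::banach set \<Rightarrow> ('y \<Rightarrow> real) \<Rightarrow> (nat \<Rightarrow> 'y set) \<Rightarrow> (nat \<Rightarrow> 'y \<Rightarrow> real) \<Rightarrow> bool" where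
  "nc_setting V nV X nX \<longleftrightarrow> reflexive_banach_on V nV \<and>
     (\<forall>n. banach_space_on (X n) (nX n) \<and> V \<subseteq> X n \<and> (\<forall>x\<in>V. nX n x = nV x))"

definition nc_approximation ::
  "'y::banach set \<Rightarrow> ('y \<Rightarrow> real) \<Rightarrow> (nat \<Rightarrow> 'y set) \<Rightarrow> (nat \<Rightarrow> 'y \<Rightarrow> real) \<Rightarrow> (nat \<Rightarrow> 'y set) \<Rightarrow> bool" where
  "nc_approximation V nV X nX Vn \<longleftrightarrow>
     (\<forall>n. Vn n \<subseteq> X n \<and> reflexive_banach_on (Vn n) (nX n)) \<and>
     (\<exists>D\<subseteq>V. (\<forall>x\<in>V. \<forall>e>0. \<exists>d\<in>D. nV (x - d) < e) \<and>
        (\<forall>d\<in>D. \<exists>w::nat \<Rightarrow> 'y. (\<forall>n. w n \<in> Vn n) \<and> (\<lambda>n. nX n (w n - d)) \<longlonglongrightarrow> 0)) \<and>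
     (\<forall>(m::nat \<Rightarrow> nat) (u::nat \<Rightarrow> 'y). filterlim m at_top sequentially \<and>
        (\<forall>n. u n \<in> Vn (m n)) \<and> (\<exists>C. \<forall>n. nX (m n) (u n) \<le> C) \<longrightarrow>
        (\<exists>r x. strict_mono r \<and> x \<in> V \<and> weakly_conv (u \<circ> r) x))"

text \<open>An operator is a map 'y \<Rightarrow> ('y \<Rightarrow> real); the duality pairing \<langle>A x, y\<rangle> is A x y.\<close>
definition nc_pseudo_monotone ::
  "'y::banach set \<Rightarrow> ('y \<Rightarrow> real) \<Rightarrow> (nat \<Rightarrow> 'y set) \<Rightarrow> (nat \<Rightarrow> 'y \<Rightarrow> real) \<Rightarrow> (nat \<Rightarrow> 'y set)
   \<Rightarrow> (nat \<Rightarrow> 'y \<Rightarrow> 'y \<Rightarrow> real) \<Rightarrow> ('y \<Rightarrow> 'y \<Rightarrow> real) \<Rightarrow> bool" where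
  "nc_pseudo_monotone V nV X nX Vn An A \<longleftrightarrow>
     (\<forall>n. \<forall>x\<in>X n. An n x \<in> dual_space (X n) (nX n)) \<and>
     (\<forall>x\<in>V. A x \<in> dual_space V nV) \<and>
     (\<forall>(m::nat \<Rightarrow> nat) (u::nat \<Rightarrow> 'y) v.
        filterlim m at_top sequentially \<and> (\<forall>n. u n \<in> Vn (m n)) \<and>
        (\<exists>C. \<forall>n. nX (m n) (u n) \<le> C) \<and> weakly_conv u v \<and> v \<in> V \<and>
        limsup (\<lambda>n. ereal (An (m n) (u n) (u n - v))) \<le> 0
        \<longrightarrow> (\<forall>z\<in>V. ereal (A v (v - z)) \<le> liminf (\<lambda>n. ereal (An (m n) (u n) (u n - z)))))"

end

theory Submission
  imports Defs
begin

text \<open>If the limsup of \<open>\<langle>A\<^sub>n u\<^sub>n + B\<^sub>n u\<^sub>n, u\<^sub>n - v\<rangle>\<close> is at most 0, so is the limsup of each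
  summand. Otherwise some subsequence has \<open>\<langle>A\<^sub>n u\<^sub>n, u\<^sub>n - v\<rangle> \<ge> \<epsilon>\<close>, hence eventually
  \<open>\<langle>B\<^sub>n u\<^sub>n, u\<^sub>n - v\<rangle> \<le> -\<epsilon>/2\<close> along it; pseudo-monotonicity of \<open>(B\<^sub>n)\<close> on this subsequence,
  tested with \<open>z = v\<close>, gives \<open>0 = \<langle>B v, 0\<rangle> \<le> liminf \<langle>B\<^sub>n u\<^sub>n, u\<^sub>n - v\<rangle> \<le> -\<epsilon>/2\<close>. So both
  operator sequences apply separately, and their liminf inequalities add up by
  superadditivity of liminf.\<close>

definition nc_test_sequence ::
  "(nat \<Rightarrow> 'y set) \<Rightarrow> (nat \<Rightarrow> 'y \<Rightarrow> real) \<Rightarrow> (nat \<Rightarrow> nat) \<Rightarrow> (nat \<Rightarrow> 'y::real_normed_vector) \<Rightarrow> 'y \<Rightarrow> bool"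
where
  "nc_test_sequence Vn nX m u v \<longleftrightarrow>
     filterlim m at_top sequentially \<and> (\<forall>n. u n \<in> Vn (m n)) \<and>
     (\<exists>C. \<forall>n. nX (m n) (u n) \<le> C) \<and> weakly_conv u v"

lemma nc_pseudo_monotone_iff:
  "nc_pseudo_monotone V nV X nX Vn An A \<longleftrightarrow>
     (\<forall>n. \<forall>x\<in>X n. An n x \<in> dual_space (X n) (nX n)) \<and>
     (\<forall>x\<in>V. A x \<in> dual_space V nV) \<and>
     (\<forall>m u v. nc_test_sequence Vn nX m u v \<and> v \<in> V \<and>
        limsup (\<lambda>n. ereal (An (m n) (u n) (u n - v))) \<le> 0
        \<longrightarrow> (\<forall>z\<in>V. ereal (A v (v - z)) \<le> liminf (\<lambda>n. ereal (An (m n) (u n) (u n - z)))))"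
  unfolding nc_pseudo_monotone_def nc_test_sequence_def by blast

lemma nc_pseudo_monotoneD:
  assumes "nc_pseudo_monotone V nV X nX Vn An A"
    and "nc_test_sequence Vn nX m u v" and "v \<in> V"
    and "limsup (\<lambda>n. ereal (An (m n) (u n) (u n - v))) \<le> 0"
    and "z \<in> V"
  shows "ereal (A v (v - z)) \<le> liminf (\<lambda>n. ereal (An (m n) (u n) (u n - z)))"
  using assms unfolding nc_pseudo_monotone_iff by blast

lemma weakly_conv_subseq:
  assumes "weakly_conv u v" and "strict_mono r"
  shows "weakly_conv (u \<circ> r) v"
  unfolding weakly_conv_def
proof (intro allI impI)
  fix f :: "'a \<Rightarrow> real"
  assume "bounded_linear f"
  with assms(1) have "(\<lambda>n. f (u n)) \<longlonglongrightarrow> f v"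
    unfolding weakly_conv_def by blast
  from LIMSEQ_subseq_LIMSEQ[OF this assms(2)] show "(\<lambda>n. f ((u \<circ> r) n)) \<longlonglongrightarrow> f v"
    by (simp add: comp_def)
qed

lemma nc_test_sequence_subseq:
  assumes "nc_test_sequence Vn nX m u v" and r: "strict_mono r"
  shows "nc_test_sequence Vn nX (m \<circ> r) (u \<circ> r) v"
proof -
  have "filterlim (m \<circ> r) at_top sequentially"
    using assms filterlim_compose[OF _ filterlim_subseq[OF r], of m at_top]
    unfolding nc_test_sequence_def comp_def by blast
  with assms show ?thesis
    unfolding nc_test_sequence_def by (auto simp: weakly_conv_subseq)
qed

lemma dual_space_add:
  assumes "f \<in> dual_space S nrm" and "g \<in> dual_space S nrm"
  shows "(\<lambda>x. f x + g x) \<in> dual_space S nrm"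
proof -
  from assms obtain Cf Cg where
    Cf: "\<forall>x\<in>S. \<bar>f x\<bar> \<le> Cf * nrm x" and Cg: "\<forall>x\<in>S. \<bar>g x\<bar> \<le> Cg * nrm x"
    unfolding dual_space_def by blast
  have "\<bar>f x + g x\<bar> \<le> (Cf + Cg) * nrm x" if "x \<in> S" for x
    using Cf Cg that abs_triangle_ineq[of "f x" "g x"] by (fastforce simp: distrib_right)
  then have "\<exists>C. \<forall>x\<in>S. \<bar>f x + g x\<bar> \<le> C * nrm x" by blast
  with assms show ?thesis
    unfolding dual_space_def by (auto simp: algebra_simps)
qed

lemma dual_space_zero:
  assumes "f \<in> dual_space S nrm" and "x \<in> S"
  shows "f 0 = 0"
proof -
  have "f (0 *\<^sub>R x) = 0 * f x"
    using assms unfolding dual_space_def by blast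
  then show ?thesis by simp
qed

lemma nc_pseudo_monotone_not_eventually_negative:
  assumes B: "nc_pseudo_monotone V nV X nX Vn Bn B"
    and test: "nc_test_sequence Vn nX m u v" and v: "v \<in> V" and "e > 0"
  shows "\<not> eventually (\<lambda>n. Bn (m n) (u n) (u n - v) \<le> - e) sequentially"
proof
  let ?b = "\<lambda>n. ereal (Bn (m n) (u n) (u n - v))"
  assume neg: "eventually (\<lambda>n. Bn (m n) (u n) (u n - v) \<le> - e) sequentially"
  then have "limsup ?b \<le> ereal (- e)"
    by (intro Limsup_bounded) (auto elim: eventually_mono)
  also have "\<dots> \<le> 0" using \<open>e > 0\<close> by simp
  finally have "ereal (B v (v - v)) \<le> liminf ?b"
    using nc_pseudo_monotoneD[OF B test v _ v] by blast
  also have "liminf ?b \<le> ereal (- e)"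
    using neg by (intro Liminf_le) (auto elim: eventually_mono)
  finally show False
    using dual_space_zero[of "B v" V nV v] B v \<open>e > 0\<close>
    unfolding nc_pseudo_monotone_iff by auto
qed

lemma nc_pseudo_monotone_limsup_summand:
  fixes a :: "nat \<Rightarrow> real"
  assumes B: "nc_pseudo_monotone V nV X nX Vn Bn B"
    and test: "nc_test_sequence Vn nX m u v" and v: "v \<in> V"
    and sum: "limsup (\<lambda>n. ereal (a n + Bn (m n) (u n) (u n - v))) \<le> 0"
  shows "limsup (\<lambda>n. ereal (a n)) \<le> 0"
proof (rule ccontr)
  let ?b = "\<lambda>n. Bn (m n) (u n) (u n - v)"
  assume "\<not> ?thesis"
  then have "0 < limsup (\<lambda>n. ereal (a n))" by simp
  then obtain e :: real where "0 < ereal e" and e_less: "ereal e < limsup (\<lambda>n. ereal (a n))"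
    using ereal_dense2 by blast
  then have "e > 0" by simp
  have "\<not> eventually (\<lambda>n. a n \<le> e) sequentially"
  proof
    assume "eventually (\<lambda>n. a n \<le> e) sequentially"
    then have "limsup (\<lambda>n. ereal (a n)) \<le> ereal e"
      by (intro Limsup_bounded) (auto elim: eventually_mono)
    with e_less show False by simp
  qed
  from not_eventually_sequentiallyD[OF this]
  obtain r :: "nat \<Rightarrow> nat" where r: "strict_mono r" and a_large: "\<And>n. e < a (r n)"
    by (auto simp: not_le)
  have "limsup (\<lambda>n. ereal (a n + ?b n)) < ereal (e / 2)"
    using sum \<open>e > 0\<close> by (simp add: le_less_trans)
  from Limsup_lessD[OF this] have "eventually (\<lambda>n. a n + ?b n < e / 2) sequentially"
    by simp
  then have "eventually (\<lambda>n. a (r n) + ?b (r n) < e / 2) sequentially"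
    using eventually_subseq[OF r] by blast
  then have "eventually (\<lambda>n. ?b (r n) \<le> - (e / 2)) sequentially"
  proof (rule eventually_mono)
    fix n
    assume "a (r n) + ?b (r n) < e / 2"
    with a_large[of n] show "?b (r n) \<le> - (e / 2)" by linarith
  qed
  moreover have "\<not> eventually (\<lambda>n. Bn ((m \<circ> r) n) ((u \<circ> r) n) ((u \<circ> r) n - v) \<le> - (e / 2)) sequentially"
    using nc_pseudo_monotone_not_eventually_negative[OF B nc_test_sequence_subseq[OF test r] v]
      \<open>e > 0\<close> by simp
  ultimately show False by simp
qed

lemma nc_pseudo_monotone_add_inequality:
  assumes PA: "nc_pseudo_monotone V nV X nX Vn An A"
    and PB: "nc_pseudo_monotone V nV X nX Vn Bn B"
    and test: "nc_test_sequence Vn nX m u v" and v: "v \<in> V" and z: "z \<in> V"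
    and sum: "limsup (\<lambda>n. ereal (An (m n) (u n) (u n - v) + Bn (m n) (u n) (u n - v))) \<le> 0"
  shows "ereal (A v (v - z) + B v (v - z))
    \<le> liminf (\<lambda>n. ereal (An (m n) (u n) (u n - z) + Bn (m n) (u n) (u n - z)))"
proof -
  let ?a = "\<lambda>w n. ereal (An (m n) (u n) (u n - w))"
    and ?b = "\<lambda>w n. ereal (Bn (m n) (u n) (u n - w))"
  have "limsup (?a v) \<le> 0"
    using nc_pseudo_monotone_limsup_summand[OF PB test v sum] .
  moreover have "limsup (?b v) \<le> 0"
    using nc_pseudo_monotone_limsup_summand[OF PA test v] sum by (simp add: add.commute)
  ultimately have A_le: "ereal (A v (v - z)) \<le> liminf (?a z)"
    and B_le: "ereal (B v (v - z)) \<le> liminf (?b z)"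
    using nc_pseudo_monotoneD[OF PA test v _ z] nc_pseudo_monotoneD[OF PB test v _ z] by auto
  then have "ereal (A v (v - z)) + ereal (B v (v - z)) \<le> liminf (?a z) + liminf (?b z)"
    by (rule add_mono)
  also have "\<dots> \<le> liminf (\<lambda>n. ?a z n + ?b z n)"
    using A_le B_le by (intro ereal_liminf_add_mono) auto
  finally show ?thesis by simp
qed

theorem lemma4p3:
  fixes V :: "'y::banach set" and nV :: "'y \<Rightarrow> real"
    and X :: "nat \<Rightarrow> 'y set" and nX :: "nat \<Rightarrow> 'y \<Rightarrow> real"
    and Vn :: "nat \<Rightarrow> 'y set"
    and An Bn :: "nat \<Rightarrow> 'y \<Rightarrow> 'y \<Rightarrow> real" and A B :: "'y \<Rightarrow> 'y \<Rightarrow> real"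
  assumes "nc_setting V nV X nX"
    and "nc_approximation V nV X nX Vn"
    and "nc_pseudo_monotone V nV X nX Vn An A"
    and "nc_pseudo_monotone V nV X nX Vn Bn B"
  shows "nc_pseudo_monotone V nV X nX Vn (\<lambda>n x y. An n x y + Bn n x y) (\<lambda>x y. A x y + B x y)"
  using assms(3,4) nc_pseudo_monotone_add_inequality[OF assms(3,4)]
  unfolding nc_pseudo_monotone_iff by (auto intro: dual_space_add)

end
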